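(* In any unit-weight graph with $\mathsf{OPT}<\mathsf{OPT}^{\mathsf{stable}}$, there exists a binary signaling scheme that is persuasive and has cost strictly lower than $\mathsf{OPT}^{\mathsf{stable}}$.
   Context: Setting. $V$ is a finite set of $n$ task types and $W=(W_{u,v})_{u,v\in V}$ is a symmetric matrix with entries in $\{0,1\}$ and $W_{v,v}=1$ for all $v$ (a unit-weight graph $G=(V,E)$ with $E=\{\{u,v\}:u\ne v,W_{u,v}=1\}$). A vector $\theta\in\mathbb{R}_{\ge0}^V$ is feasible if $W\theta\ge\mathbf 1$ coordinatewise, and stable if it is feasible and for every $v$, $\theta_v=\min\{x\ge0: x+\sum_{v'\neq v}W_{v,v'}\theta_{v'}\ge1\}$. $\mathsf{OPT}=\min\{\|\theta\|_1:\theta\ge0\text{ feasible}\}$ and $\mathsf{OPT}^{\mathsf{stable}}=\min\{\|\theta\|_1:\theta\text{ stable}\}$. Signaling. There are $n$ agents; the type profile $t=(t_1,\dots,t_n)$ is a uniformly random bijection $[n]\to V$. A signaling scheme with finite signal space $\Sigma\subset[0,1]$ is a map $\varphi$ assigning to each bijection $t$ a distribution $\varphi(t)$ on $\Sigma^V$; given $t$, $s\sim\varphi(t)$ is drawn and agent $i$ privately receives $s_{t_i}$. For agent $i$, a signal $\theta\in\Sigma$ with $\Pr[s_{t_i}=\theta]>0$ and $x\ge0$, let $Q_i(x\mid\theta)=\mathbb{E}\big[x+\sum_{v'\neq t_i}W_{t_i,v'}s_{v'}\,\big|\,s_{t_i}=\theta\big]$. The scheme is persuasive if for every agent $i$ and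 every such $\theta$: $Q_i(\theta\mid\theta)\ge1$ and $\theta=\min\{x\ge0:Q_i(x\mid\theta)\ge1\}$. Its cost is $\mathbb{E}[\|s\|_1]$. Binary means $|\Sigma|=2$. *)

theory Defs
  imports "HOL-Probability.Probability"
begin

text \<open>Task types form a finite type 'v; W is the weight matrix. Agents form a finite
  type 'a with as many elements as 'v (agents [n], n = |V|).\<close>

definition unit_weight :: "('v::finite \<Rightarrow> 'v \<Rightarrow> real) \<Rightarrow> bool" where
  "unit_weight W \<longleftrightarrow> (\<forall>u v. W u v \<in> {0, 1}) \<and> (\<forall>u v. W u v = W v u) \<and> (\<forall>v. W v v = 1)"

definition feasible :: "('v::finite \<Rightarrow> 'v \<Rightarrow> real) \<Rightarrow> ('v \<Rightarrow> real) \<Rightarrow> bool" where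
  "feasible W \<theta> \<longleftrightarrow> (\<forall>v. \<theta> v \<ge> 0) \<and> (\<forall>v. (\<Sum>u\<in>UNIV. W v u * \<theta> u) \<ge> 1)"

definition stable :: "('v::finite \<Rightarrow> 'v \<Rightarrow> real) \<Rightarrow> ('v \<Rightarrow> real) \<Rightarrow> bool" where
  "stable W \<theta> \<longleftrightarrow> feasible W \<theta> \<and>
     (\<forall>v. \<theta> v = (LEAST x::real. x \<ge> 0 \<and> x + (\<Sum>u\<in>UNIV - {v}. W v u * \<theta> u) \<ge> 1))"

definition l1norm :: "('v::finite \<Rightarrow> real) \<Rightarrow> real" where
  "l1norm \<theta> = (\<Sum>v\<in>UNIV. \<bar>\<theta> v\<bar>)"

definition OPT :: "('v::finite \<Rightarrow> 'v \<Rightarrow> real) \<Rightarrow> real" where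
  "OPT W = Inf (l1norm ` {\<theta>. feasible W \<theta>})"

definition OPT_stable :: "('v::finite \<Rightarrow> 'v \<Rightarrow> real) \<Rightarrow> real" where
  "OPT_stable W = Inf (l1norm ` {\<theta>. stable W \<theta>})"

text \<open>A signaling scheme with finite signal space Sig \<subseteq> [0,1]: to each type profile
  (bijection agents \<rightarrow> types) a distribution on signal vectors Sig^V.\<close>

definition signaling_scheme ::
  "real set \<Rightarrow> (('a::finite \<Rightarrow> 'v::finite) \<Rightarrow> ('v \<Rightarrow> real) pmf) \<Rightarrow> bool" where
  "signaling_scheme Sig \<phi> \<longleftrightarrow> finite Sig \<and> Sig \<subseteq> {0..1} \<and>
     (\<forall>t. bij t \<longrightarrow> set_pmf (\<phi> t) \<subseteq> {s. \<forall>v. s v \<in> Sig})"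

definition joint :: "(('a::finite \<Rightarrow> 'v::finite) \<Rightarrow> ('v \<Rightarrow> real) pmf) \<Rightarrow> (('a \<Rightarrow> 'v) \<times> ('v \<Rightarrow> real)) pmf" where
  "joint \<phi> = bind_pmf (pmf_of_set {t. bij t}) (\<lambda>t. map_pmf (\<lambda>s. (t, s)) (\<phi> t))"

definition Q :: "('v::finite \<Rightarrow> 'v \<Rightarrow> real) \<Rightarrow> (('a::finite \<Rightarrow> 'v) \<Rightarrow> ('v \<Rightarrow> real) pmf)
    \<Rightarrow> 'a \<Rightarrow> real \<Rightarrow> real \<Rightarrow> real" where
  "Q W \<phi> i \<theta> x = measure_pmf.expectation (cond_pmf (joint \<phi>) {(t, s). s (t i) = \<theta>})
      (\<lambda>(t, s). x + (\<Sum>v'\<in>UNIV - {t i}. W (t i) v' * s v'))"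

definition persuasive :: "('v::finite \<Rightarrow> 'v \<Rightarrow> real) \<Rightarrow> (('a::finite \<Rightarrow> 'v) \<Rightarrow> ('v \<Rightarrow> real) pmf) \<Rightarrow> bool" where
  "persuasive W \<phi> \<longleftrightarrow> (\<forall>i \<theta>. measure_pmf.prob (joint \<phi>) {(t, s). s (t i) = \<theta>} > 0 \<longrightarrow>
      Q W \<phi> i \<theta> \<theta> \<ge> 1 \<and> \<theta> = (LEAST x::real. x \<ge> 0 \<and> Q W \<phi> i \<theta> x \<ge> 1))"

definition cost :: "(('a::finite \<Rightarrow> 'v::finite) \<Rightarrow> ('v \<Rightarrow> real) pmf) \<Rightarrow> real" where
  "cost \<phi> = measure_pmf.expectation (joint \<phi>) (\<lambda>(t, s). l1norm s)"

end

theory Submission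
  imports Defs
begin

text \<open>
  Let \<open>m = OPT_stable W\<close>, \<open>n = CARD('v)\<close>, and fix a feasible \<open>\<theta>\<^sub>0\<close> with \<open>l1norm \<theta>\<^sub>0 < m\<close>.
  For any feasible \<open>\<theta>\<close>, weighting the constraints \<open>1 \<le> (\<Sum>v. W u v * \<theta>\<^sub>0 v)\<close> by \<open>\<theta> u\<close> and
  using the symmetry of \<open>W\<close> gives \<open>l1norm \<theta> \<le> l1norm \<theta>\<^sub>0 * (1 + R - n)\<close>, where \<open>R\<close> is the
  total coverage of \<open>\<theta>\<close>. So a stable \<open>\<theta>\<close> of cost close to \<open>m\<close> has \<open>R\<close> bounded away from \<open>n\<close>,
  and \<open>x = (n / R) * \<theta>\<close> costs less than \<open>m\<close> while its total coverage is exactly \<open>n\<close>.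

  Stability makes every positive coordinate of \<open>\<theta>\<close> tight, so
  \<open>x v + (\<Sum>u \<noteq> v. W v u * x u) \<le> 1\<close> whenever \<open>x v > 0\<close>; this is what is needed to realise
  \<open>x\<close> as the marginals of a random independent set \<open>S\<close>, built one vertex at a time. The scheme
  sends signal 1 to the types in \<open>S\<close> and 0 to the others. An agent told 1 knows that none of its
  neighbours works. Under a uniformly random bijection each agent's type is uniform and
  independent of \<open>S\<close>, so an agent told 0 expects coverage at least \<open>n / n = 1\<close> from the others.
\<close>

section \<open>Stable vectors and independent sets\<close>

lemma least_nonneg_shift: "(LEAST x::real. 0 \<le> x \<and> 1 \<le> x + c) = max 0 (1 - c)"
  by (rule Least_equality) auto

lemma l1norm_nonneg: "0 \<le> l1norm \<theta>"
  by (simp add: l1norm_def sum_nonneg)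

lemma l1norm_eq_sum: "(\<And>v. 0 \<le> \<theta> v) \<Longrightarrow> l1norm \<theta> = (\<Sum>v\<in>UNIV. \<theta> v)"
  by (simp add: l1norm_def)

definition total_coverage :: "('v::finite \<Rightarrow> 'v \<Rightarrow> real) \<Rightarrow> ('v \<Rightarrow> real) \<Rightarrow> real" where
  "total_coverage W \<theta> = (\<Sum>v\<in>UNIV. \<Sum>u\<in>UNIV. W v u * \<theta> u)"

lemma stable_tight:
  assumes "stable W \<theta>" and "0 < \<theta> v"
  shows "\<theta> v + (\<Sum>u\<in>UNIV - {v}. W v u * \<theta> u) = 1"
proof -
  have "\<theta> v = max 0 (1 - (\<Sum>u\<in>UNIV - {v}. W v u * \<theta> u))"
    using assms(1) unfolding stable_def least_nonneg_shift by blast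
  then show ?thesis using assms(2) by (simp add: max_def split: if_splits)
qed

lemma stable_scaled_local_bound:
  assumes "stable W \<theta>" and "r \<le> 1" and "0 < r * \<theta> v"
  shows "r * \<theta> v + (\<Sum>u\<in>UNIV - {v}. W v u * (r * \<theta> u)) \<le> 1"
proof -
  have "0 \<le> \<theta> v"
    using assms(1) unfolding stable_def feasible_def by blast
  with assms(3) have "0 < \<theta> v"
    by (auto simp: zero_less_mult_iff)
  have "(\<Sum>u\<in>UNIV - {v}. W v u * (r * \<theta> u)) = r * (\<Sum>u\<in>UNIV - {v}. W v u * \<theta> u)"
    by (simp add: sum_distrib_left mult.left_commute)
  then have "r * \<theta> v + (\<Sum>u\<in>UNIV - {v}. W v u * (r * \<theta> u)) = r * 1"
    using stable_tight[OF assms(1) \<open>0 < \<theta> v\<close>] by (simp flip: distrib_left)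
  with assms(2) show ?thesis by simp
qed

definition independent_set :: "('v \<Rightarrow> 'v \<Rightarrow> real) \<Rightarrow> 'v set \<Rightarrow> bool" where
  "independent_set W S \<longleftrightarrow> (\<forall>u\<in>S. \<forall>v\<in>S. u \<noteq> v \<longrightarrow> W u v = 0)"

lemma independent_set_others_coverage:
  assumes "independent_set W S" and "v \<in> S"
  shows "(\<Sum>u\<in>UNIV - {v}. W v u * indicator S u) = 0"
  using assms unfolding independent_set_def by (intro sum.neutral) (auto simp: indicator_def)

lemma stable_indicator_maximal_independent:
  fixes W :: "'v::finite \<Rightarrow> 'v \<Rightarrow> real"
  assumes uw: "unit_weight W" and indep: "independent_set W S"
    and maximal: "\<And>v. v \<notin> S \<Longrightarrow> \<exists>u\<in>S. W v u = 1"
  shows "stable W (indicator S)"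
proof -
  have W01: "W v u \<in> {0, 1}" for v u
    using uw by (simp add: unit_weight_def)
  have W_nonneg: "0 \<le> W v u" for v u
    using W01[of v u] by auto
  define c where "c v = (\<Sum>u\<in>UNIV - {v}. W v u * indicator S u)" for v
  have c_in: "c v = 0" if "v \<in> S" for v
    unfolding c_def using indep that by (rule independent_set_others_coverage)
  have c_out: "1 \<le> c v" if out: "v \<notin> S" for v
  proof -
    obtain u where u: "u \<in> S" "W v u = 1" using maximal[OF out] by blast
    then have "W v u * indicator S u \<le> c v"
      unfolding c_def using out W_nonneg by (intro member_le_sum) auto
    with u show ?thesis by simp
  qed
  have coverage_split: "(\<Sum>u\<in>UNIV. W v u * indicator S u) = W v v * indicator S v + c v" for v
    unfolding c_def by (rule sum.remove) auto
  have W_diag: "W v v = 1" for v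
    using uw by (simp add: unit_weight_def)
  show ?thesis
    unfolding stable_def feasible_def least_nonneg_shift
  proof (intro conjI allI)
    fix v
    show "0 \<le> (indicator S v :: real)" by simp
    show "1 \<le> (\<Sum>u\<in>UNIV. W v u * indicator S u)"
      using c_in[of v] c_out[of v] by (cases "v \<in> S") (simp_all add: coverage_split W_diag)
    show "(indicator S v :: real) = max 0 (1 - (\<Sum>u\<in>UNIV - {v}. W v u * indicator S u))"
      using c_in[of v] c_out[of v] by (cases "v \<in> S") (simp_all add: c_def)
  qed
qed

lemma stable_exists:
  fixes W :: "'v::finite \<Rightarrow> 'v \<Rightarrow> real"
  assumes uw: "unit_weight W"
  shows "\<exists>\<theta>. stable W \<theta>"
proof -
  have "independent_set W {}" by (simp add: independent_set_def)
  moreover have "\<forall>S. independent_set W S \<longrightarrow> card S < Suc CARD('v)"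
    by (simp add: card_mono le_imp_less_Suc)
  ultimately obtain S where S: "independent_set W S"
    and S_max: "\<And>S'. independent_set W S' \<Longrightarrow> card S' \<le> card S"
    using Lattices_Big.ex_has_greatest_nat[of "independent_set W" "{}" card] by blast
  have "\<exists>u\<in>S. W v u = 1" if out: "v \<notin> S" for v
  proof (rule ccontr)
    assume "\<not> (\<exists>u\<in>S. W v u = 1)"
    then have "\<forall>u\<in>S. W v u = 0 \<and> W u v = 0"
      using uw by (force simp: unit_weight_def)
    then have "independent_set W (insert v S)"
      using S by (auto simp: independent_set_def)
    then have "card (insert v S) \<le> card S" by (rule S_max)
    with out show False by simp
  qed
  then show ?thesis
    using stable_indicator_maximal_independent[OF uw S] by blast
qed

section \<open>Stable vectors of small cost relative to their coverage\<close>

lemma l1norm_le_coverage_excess: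
  fixes W :: "'v::finite \<Rightarrow> 'v \<Rightarrow> real"
  assumes W_sym: "\<And>u v. W u v = W v u" and "feasible W \<theta>\<^sub>0" and "feasible W \<theta>"
  shows "l1norm \<theta> \<le> l1norm \<theta>\<^sub>0 * (1 + (total_coverage W \<theta> - CARD('v)))"
proof -
  have nonneg0: "0 \<le> \<theta>\<^sub>0 v" and cover0: "1 \<le> (\<Sum>u\<in>UNIV. W v u * \<theta>\<^sub>0 u)"
    and nonneg: "0 \<le> \<theta> v" and cover: "1 \<le> (\<Sum>u\<in>UNIV. W v u * \<theta> u)" for v
    using assms(2,3) by (auto simp: feasible_def)
  define T\<^sub>0 where "T\<^sub>0 = l1norm \<theta>\<^sub>0"
  have T\<^sub>0_sum: "T\<^sub>0 = (\<Sum>v\<in>UNIV. \<theta>\<^sub>0 v)" using nonneg0 by (simp add: T\<^sub>0_def l1norm_eq_sum)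
  have le_T\<^sub>0: "\<theta>\<^sub>0 v \<le> T\<^sub>0" for v
    unfolding T\<^sub>0_sum using nonneg0 by (intro member_le_sum) auto
  have "l1norm \<theta> = (\<Sum>u\<in>UNIV. \<theta> u * 1)" using nonneg by (simp add: l1norm_eq_sum)
  also have "\<dots> \<le> (\<Sum>u\<in>UNIV. \<theta> u * (\<Sum>v\<in>UNIV. W u v * \<theta>\<^sub>0 v))"
    using nonneg cover0 by (intro sum_mono mult_left_mono) auto
  also have "\<dots> = (\<Sum>u\<in>UNIV. \<Sum>v\<in>UNIV. \<theta>\<^sub>0 v * (W v u * \<theta> u))"
    using W_sym by (simp add: sum_distrib_left mult.commute mult.left_commute)
  also have "\<dots> = (\<Sum>v\<in>UNIV. \<Sum>u\<in>UNIV. \<theta>\<^sub>0 v * (W v u * \<theta> u))"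
    by (rule sum.swap)
  also have "\<dots> = (\<Sum>v\<in>UNIV. \<theta>\<^sub>0 v * (\<Sum>u\<in>UNIV. W v u * \<theta> u))"
    by (simp add: sum_distrib_left)
  also have "\<dots> \<le> (\<Sum>v\<in>UNIV. \<theta>\<^sub>0 v + T\<^sub>0 * ((\<Sum>u\<in>UNIV. W v u * \<theta> u) - 1))"
  proof (rule sum_mono)
    fix v
    have "\<theta>\<^sub>0 v * ((\<Sum>u\<in>UNIV. W v u * \<theta> u) - 1) \<le> T\<^sub>0 * ((\<Sum>u\<in>UNIV. W v u * \<theta> u) - 1)"
      using le_T\<^sub>0[of v] cover[of v] by (intro mult_right_mono) auto
    then show "\<theta>\<^sub>0 v * (\<Sum>u\<in>UNIV. W v u * \<theta> u) \<le> \<theta>\<^sub>0 v + T\<^sub>0 * ((\<Sum>u\<in>UNIV. W v u * \<theta> u) - 1)"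
      by (simp add: algebra_simps)
  qed
  also have "\<dots> = T\<^sub>0 + T\<^sub>0 * (total_coverage W \<theta> - CARD('v))"
    by (simp add: sum.distrib sum_subtractf T\<^sub>0_sum total_coverage_def flip: sum_distrib_left)
  finally show ?thesis by (simp add: T\<^sub>0_def distrib_left)
qed

lemma OPT_stable_le_l1norm: "stable W \<theta> \<Longrightarrow> OPT_stable W \<le> l1norm \<theta>"
  unfolding OPT_stable_def by (rule cInf_lower) (auto intro: bdd_belowI[of _ 0] l1norm_nonneg)

lemma stable_with_cheap_rescaling:
  fixes W :: "'v::finite \<Rightarrow> 'v \<Rightarrow> real"
  assumes uw: "unit_weight W" and gap: "OPT W < OPT_stable W"
  obtains \<theta> where "stable W \<theta>" and "CARD('v) \<le> total_coverage W \<theta>"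
    and "CARD('v) * l1norm \<theta> < OPT_stable W * total_coverage W \<theta>"
proof -
  define m where "m = OPT_stable W"
  define n where "n = real CARD('v)"
  have W_sym: "W u v = W v u" for u v using uw by (simp add: unit_weight_def)
  obtain \<theta>\<^sub>s where "stable W \<theta>\<^sub>s" using stable_exists[OF uw] ..
  then have "feasible W \<theta>\<^sub>s" by (simp add: stable_def)
  then obtain \<theta>\<^sub>0 where feasible0: "feasible W \<theta>\<^sub>0" and T\<^sub>0: "l1norm \<theta>\<^sub>0 < m"
    using gap cInf_lessD[of "l1norm ` {\<theta>. feasible W \<theta>}"] by (auto simp: OPT_def m_def)
  define T\<^sub>0 where "T\<^sub>0 = l1norm \<theta>\<^sub>0"
  have excess: "m - T\<^sub>0 \<le> T\<^sub>0 * (total_coverage W \<theta> - n)" if "stable W \<theta>" for \<theta>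
  proof -
    have "m \<le> l1norm \<theta>" unfolding m_def using that by (rule OPT_stable_le_l1norm)
    also have "\<dots> \<le> T\<^sub>0 * (1 + (total_coverage W \<theta> - n))"
      using that feasible0 unfolding T\<^sub>0_def n_def stable_def
      by (intro l1norm_le_coverage_excess W_sym) auto
    finally show ?thesis by (simp add: algebra_simps)
  qed
  have "0 < T\<^sub>0"
    using excess[OF \<open>stable W \<theta>\<^sub>s\<close>] T\<^sub>0 l1norm_nonneg[of \<theta>\<^sub>0]
    by (cases "T\<^sub>0 = 0") (auto simp: T\<^sub>0_def)
  \<comment> \<open>chosen so that \<open>n * (l1norm \<theta> - m) < m * (m - T\<^sub>0) / T\<^sub>0 \<le> m * (R - n)\<close>\<close>
  define \<kappa> where "\<kappa> = m * (m - T\<^sub>0) / (n * T\<^sub>0)"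
  have "0 < \<kappa>" using T\<^sub>0 \<open>0 < T\<^sub>0\<close> by (simp add: \<kappa>_def n_def T\<^sub>0_def)
  then obtain \<theta> where stable: "stable W \<theta>" and T: "l1norm \<theta> < m + \<kappa>"
    using \<open>stable W \<theta>\<^sub>s\<close> cInf_lessD[of "l1norm ` {\<theta>. stable W \<theta>}" "m + \<kappa>"]
    by (auto simp: OPT_stable_def m_def)
  define R where "R = total_coverage W \<theta>"
  have gain: "(m - T\<^sub>0) / T\<^sub>0 \<le> R - n"
    using excess[OF stable] \<open>0 < T\<^sub>0\<close> by (simp add: R_def divide_le_eq mult.commute)
  moreover have "0 < (m - T\<^sub>0) / T\<^sub>0" using T\<^sub>0 \<open>0 < T\<^sub>0\<close> by (simp add: T\<^sub>0_def)
  ultimately have "n \<le> R" by simp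
  have "n * l1norm \<theta> < n * m + m * ((m - T\<^sub>0) / T\<^sub>0)"
    using T \<open>0 < T\<^sub>0\<close> by (simp add: \<kappa>_def n_def field_simps)
  also have "\<dots> \<le> n * m + m * (R - n)"
    using gain T\<^sub>0 \<open>0 < T\<^sub>0\<close> by (intro add_left_mono mult_left_mono) (auto simp: T\<^sub>0_def)
  finally have "n * l1norm \<theta> < m * R" by (simp add: algebra_simps)
  with stable \<open>n \<le> R\<close> show ?thesis
    using that unfolding m_def n_def R_def by blast
qed

section \<open>Random independent sets with prescribed marginals\<close>

lemma pmf_insert_on_event:
  fixes D :: "'b set pmf"
  assumes not_in: "\<And>S. S \<in> set_pmf D \<Longrightarrow> a \<notin> S"
    and r: "0 \<le> r" "r \<le> measure_pmf.prob D E"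
  obtains D' where "\<And>S'. S' \<in> set_pmf D' \<Longrightarrow> \<exists>S\<in>set_pmf D. S' = S \<or> (S \<in> E \<and> S' = insert a S)"
    and "map_pmf (\<lambda>S. S - {a}) D' = D"
    and "measure_pmf.prob D' {S. a \<in> S} = r"
proof -
  define p where "p = measure_pmf.prob D E"
  \<comment> \<open>if \<open>p = 0\<close> then \<open>r = 0\<close>, and \<open>q = 0 / 0 = 0\<close> still works\<close>
  define q where "q = r / p"
  have q: "0 \<le> q" "q \<le> 1" "q * p = r"
    using r by (auto simp: q_def p_def field_split_simps)
  define add where "add S = (if S \<in> E then map_pmf (\<lambda>b. if b then insert a S else S) (bernoulli_pmf q)
    else return_pmf S)" for S
  define D' where "D' = bind_pmf D add"
  have "\<exists>S\<in>set_pmf D. S' = S \<or> (S \<in> E \<and> S' = insert a S)" if "S' \<in> set_pmf D'" for S'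
    using that by (auto simp: D'_def add_def split: if_splits)
  moreover have "map_pmf (\<lambda>S. S - {a}) D' = D"
  proof -
    have "map_pmf (\<lambda>S. S - {a}) (add S) = return_pmf S" if "S \<in> set_pmf D" for S
    proof -
      have "(\<lambda>b. (if b then insert a S else S) - {a}) = (\<lambda>_. S)"
        using not_in[OF that] by (auto simp: fun_eq_iff)
      then show ?thesis using not_in[OF that] by (simp add: add_def pmf.map_comp o_def map_pmf_const)
    qed
    then have "map_pmf (\<lambda>S. S - {a}) D' = bind_pmf D return_pmf"
      by (simp add: D'_def map_bind_pmf cong: bind_pmf_cong)
    then show ?thesis by (simp add: bind_return_pmf')
  qed
  moreover have "measure_pmf.prob D' {S. a \<in> S} = r"
  proof -
    have "map_pmf (\<lambda>S. a \<in> S) (add S) = (if S \<in> E then bernoulli_pmf q else return_pmf False)"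
      if "S \<in> set_pmf D" for S
      using not_in[OF that] by (auto simp: add_def pmf.map_comp o_def)
    then have law_a: "map_pmf (\<lambda>S. a \<in> S) D' =
        bind_pmf D (\<lambda>S. if S \<in> E then bernoulli_pmf q else return_pmf False)"
      by (simp add: D'_def map_bind_pmf cong: bind_pmf_cong)
    have "measure_pmf.prob D' {S. a \<in> S} = pmf (map_pmf (\<lambda>S. a \<in> S) D') True"
      by (simp add: pmf_map vimage_def)
    also have "\<dots> = (\<integral>S. q * indicator E S \<partial>measure_pmf D)"
      unfolding law_a pmf_bind using q by (intro Bochner_Integration.integral_cong) (auto simp: indicator_def)
    also have "\<dots> = r" using q by (simp add: p_def)
    finally show ?thesis .
  qed
  ultimately show ?thesis using that by blast
qed

lemma independent_set_pmf_with_marginals: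
  fixes W :: "'v::finite \<Rightarrow> 'v \<Rightarrow> real" and x :: "'v \<Rightarrow> real"
  assumes W01: "\<And>u v. W u v \<in> {0, 1}" and W_sym: "\<And>u v. W u v = W v u"
    and x_nonneg: "\<And>v. 0 \<le> x v"
    and x_local: "\<And>v. 0 < x v \<Longrightarrow> x v + (\<Sum>u\<in>UNIV - {v}. W v u * x u) \<le> 1"
    and "finite F"
  shows "\<exists>D. (\<forall>S\<in>set_pmf D. S \<subseteq> F \<and> independent_set W S) \<and>
             (\<forall>v\<in>F. measure_pmf.prob D {S. v \<in> S} = x v)"
  using \<open>finite F\<close>
proof (induction F rule: finite_induct)
  case empty
  show ?case by (intro exI[of _ "return_pmf {}"]) (auto simp: independent_set_def)
next
  case (insert a F)
  then obtain D where D_supp: "\<And>S. S \<in> set_pmf D \<Longrightarrow> S \<subseteq> F \<and> independent_set W S"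
    and D_marg: "\<And>v. v \<in> F \<Longrightarrow> measure_pmf.prob D {S. v \<in> S} = x v"
    by blast
  define E where "E = {S. \<forall>u\<in>F. W a u \<noteq> 0 \<longrightarrow> u \<notin> S}"
  \<comment> \<open>by the local bound at \<open>a\<close>, no neighbour of \<open>a\<close> is in the set with probability \<open>\<ge> x a\<close>\<close>
  have "x a \<le> measure_pmf.prob D E"
  proof (cases "x a = 0")
    case False
    then have "0 < x a" using x_nonneg[of a] by simp
    have W_nonneg: "0 \<le> W u v" for u v using W01[of u v] by auto
    define N where "N = {u\<in>F. W a u \<noteq> 0}"
    have "UNIV - E = (\<Union>u\<in>N. {S. u \<in> S})" by (auto simp: E_def N_def)
    then have "measure_pmf.prob D (UNIV - E) \<le> (\<Sum>u\<in>N. measure_pmf.prob D {S. u \<in> S})"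
      using insert.hyps(1)
      by (simp add: N_def measure_pmf.finite_measure_subadditive_finite)
    also have "\<dots> = (\<Sum>u\<in>N. W a u * x u)"
      using D_marg W01 by (intro sum.cong) (auto simp: N_def)
    also have "\<dots> \<le> (\<Sum>u\<in>UNIV - {a}. W a u * x u)"
      using insert.hyps(2) W_nonneg x_nonneg by (intro sum_mono2) (auto simp: N_def)
    also have "\<dots> \<le> 1 - x a" using x_local[OF \<open>0 < x a\<close>] by simp
    finally show ?thesis using measure_pmf.prob_compl[of E D] by simp
  qed simp
  then obtain D' where
    D'_supp: "\<And>S'. S' \<in> set_pmf D' \<Longrightarrow> \<exists>S\<in>set_pmf D. S' = S \<or> (S \<in> E \<and> S' = insert a S)"
    and D'_proj: "map_pmf (\<lambda>S. S - {a}) D' = D"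
    and D'_a: "measure_pmf.prob D' {S. a \<in> S} = x a"
    using pmf_insert_on_event[of D a "x a" E] x_nonneg D_supp insert.hyps(2) by blast
  have "S' \<subseteq> insert a F \<and> independent_set W S'" if "S' \<in> set_pmf D'" for S'
  proof -
    obtain S where S: "S \<in> set_pmf D" "S' = S \<or> (S \<in> E \<and> S' = insert a S)"
      using D'_supp[OF \<open>S' \<in> set_pmf D'\<close>] by blast
    have "W a u = 0" if "S \<in> E" "u \<in> S" for u
      using that D_supp[OF S(1)] by (auto simp: E_def)
    then show ?thesis
      using S D_supp[OF S(1)] W_sym by (auto simp: independent_set_def)
  qed
  moreover have "measure_pmf.prob D' {S. v \<in> S} = x v" if "v \<in> F" for v
  proof -
    have "{S. v \<in> S} = (\<lambda>S. S - {a}) -` {S. v \<in> S}"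
      using that insert.hyps(2) by auto
    then have "measure_pmf.prob D' {S. v \<in> S} = measure_pmf.prob (map_pmf (\<lambda>S. S - {a}) D') {S. v \<in> S}"
      by simp
    then show ?thesis using D'_proj D_marg[OF that] by simp
  qed
  ultimately show ?case using D'_a by (intro exI[of _ D']) auto
qed

section \<open>Uniform types and conditional expectations\<close>

lemma pmf_eq_pmf_of_set_UNIV:
  fixes p :: "'b::finite pmf"
  assumes "\<And>u v. pmf p u = pmf p v"
  shows "p = pmf_of_set UNIV"
proof (rule pmf_eqI)
  fix v
  have "1 = (\<Sum>u\<in>UNIV. pmf p u)" by (simp add: sum_pmf_eq_1)
  also have "\<dots> = (\<Sum>u::'b\<in>UNIV. pmf p v)" by (rule sum.cong) (auto intro: assms)
  also have "\<dots> = CARD('b) * pmf p v" by simp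
  finally show "pmf p v = pmf (pmf_of_set UNIV) v" by (simp add: field_simps)
qed

lemma bij_betw_comp_left_bij:
  fixes \<sigma> :: "'v \<Rightarrow> 'v"
  assumes "bij \<sigma>"
  shows "bij_betw ((\<circ>) \<sigma>) {t::'a \<Rightarrow> 'v. bij t} {t. bij t}"
proof (rule bij_betw_byWitness[where f' = "(\<circ>) (inv \<sigma>)"])
  show "\<forall>t\<in>{t. bij t}. inv \<sigma> \<circ> (\<sigma> \<circ> t) = t" "\<forall>t\<in>{t. bij t}. \<sigma> \<circ> (inv \<sigma> \<circ> t) = t"
    using inv_o_cancel[OF bij_is_inj[OF assms]] bij_is_surj[OF assms, unfolded surj_iff]
    by (simp_all add: o_assoc)
  show "(\<circ>) \<sigma> ` {t. bij t} \<subseteq> {t. bij t}" "(\<circ>) (inv \<sigma>) ` {t. bij t} \<subseteq> {t. bij t}"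
    using assms by (auto intro: bij_comp bij_imp_bij_inv)
qed

lemma map_pmf_eval_uniform_bij:
  assumes "CARD('a::finite) = CARD('v::finite)"
  shows "map_pmf (\<lambda>t. t i) (pmf_of_set {t::'a \<Rightarrow> 'v. bij t}) = pmf_of_set UNIV"
proof (rule pmf_eq_pmf_of_set_UNIV)
  define U where "U = pmf_of_set {t::'a \<Rightarrow> 'v. bij t}"
  obtain h :: "'a \<Rightarrow> 'v" where "bij h"
    using finite_same_card_bij[of "UNIV::'a set" "UNIV::'v set"] assms by auto
  then have nonempty: "{t::'a \<Rightarrow> 'v. bij t} \<noteq> {}" by blast
  fix u v :: 'v
  define \<sigma> where "\<sigma> = Transposition.transpose u v"
  have "map_pmf ((\<circ>) \<sigma>) U = U"
    unfolding U_def \<sigma>_def using nonempty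
    by (intro map_pmf_of_set_bij_betw bij_betw_comp_left_bij) simp_all
  moreover have "map_pmf \<sigma> (map_pmf (\<lambda>t. t i) U) = map_pmf (\<lambda>t. t i) (map_pmf ((\<circ>) \<sigma>) U)"
    by (simp add: pmf.map_comp o_def)
  ultimately have invariant: "map_pmf \<sigma> (map_pmf (\<lambda>t. t i) U) = map_pmf (\<lambda>t. t i) U"
    by simp
  have "pmf (map_pmf (\<lambda>t. t i) U) u = pmf (map_pmf \<sigma> (map_pmf (\<lambda>t. t i) U)) (\<sigma> u)"
    by (rule pmf_map_inj'[symmetric]) (simp add: \<sigma>_def)
  also have "\<dots> = pmf (map_pmf (\<lambda>t. t i) U) v"
    unfolding invariant by (simp add: \<sigma>_def)
  finally show "pmf (map_pmf (\<lambda>t. t i) U) u = pmf (map_pmf (\<lambda>t. t i) U) v" .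
qed

lemma integrable_measure_pmf_finite_type [simp]:
  "integrable (measure_pmf (M :: 'b::finite pmf)) (f :: 'b \<Rightarrow> real)"
  by (rule integrable_measure_pmf_finite) simp

lemma expectation_weighted_indicator_sum:
  fixes D :: "'v::finite set pmf" and w :: "'v \<Rightarrow> real"
  shows "measure_pmf.expectation D (\<lambda>S. \<Sum>u\<in>UNIV. w u * indicator S u) =
    (\<Sum>u\<in>UNIV. w u * measure_pmf.prob D {S. u \<in> S})"
proof -
  have "measure_pmf.expectation D (\<lambda>S. indicator S u) = measure_pmf.prob D {S. u \<in> S}" for u
  proof -
    have "(\<lambda>S. indicator S u :: real) = indicator {S. u \<in> S}"
      by (auto simp: fun_eq_iff indicator_def)
    then show ?thesis by (simp add: measure_pmf.emeasure_eq_measure)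
  qed
  moreover have "measure_pmf.expectation D (\<lambda>S. \<Sum>u\<in>UNIV. w u * indicator S u) =
      (\<Sum>u\<in>UNIV. measure_pmf.expectation D (\<lambda>S. w u * indicator S u))"
    by (rule Bochner_Integration.integral_sum) simp
  ultimately show ?thesis by simp
qed

lemma expectation_pair_uniform:
  fixes D :: "'b::finite pmf" and h :: "'v::finite \<times> 'b \<Rightarrow> real"
  shows "measure_pmf.expectation (pair_pmf (pmf_of_set UNIV) D) h =
    (\<Sum>v\<in>UNIV. measure_pmf.expectation D (\<lambda>b. h (v, b))) / CARD('v)"
proof -
  have pair_eq: "pair_pmf (pmf_of_set UNIV) D = bind_pmf (pmf_of_set UNIV) (\<lambda>v. map_pmf (Pair v) D)"
    by (simp add: pair_pmf_def map_pmf_def)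
  show ?thesis
    unfolding pair_eq
    by (subst pmf_expectation_bind_pmf_of_set) (simp_all add: sum_distrib_left divide_inverse_commute)
qed

lemma expectation_cond_pmf:
  assumes fin: "finite (set_pmf p)" and pos: "0 < measure_pmf.prob p A"
  shows "measure_pmf.expectation (cond_pmf p A) f =
    measure_pmf.expectation p (\<lambda>z. indicator A z * f z) / measure_pmf.prob p A"
proof -
  have ne: "set_pmf p \<inter> A \<noteq> {}"
    using pos measure_pmf_zero_iff[of p A] by auto
  have "measure_pmf.expectation (cond_pmf p A) f = (\<Sum>z\<in>set_pmf p. f z * pmf (cond_pmf p A) z)"
    using fin ne by (intro integral_measure_pmf_real) auto
  also have "\<dots> = (\<Sum>z\<in>set_pmf p. indicator A z * f z * pmf p z / measure_pmf.prob p A)"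
    using ne by (intro sum.cong) (auto simp: pmf_cond indicator_def)
  also have "\<dots> = (\<Sum>z\<in>set_pmf p. indicator A z * f z * pmf p z) / measure_pmf.prob p A"
    by (simp add: sum_divide_distrib)
  also have "(\<Sum>z\<in>set_pmf p. indicator A z * f z * pmf p z) =
      measure_pmf.expectation p (\<lambda>z. indicator A z * f z)"
    using fin by (intro integral_measure_pmf_real[symmetric]) auto
  finally show ?thesis .
qed

lemma expectation_cond_map_pmf:
  fixes h :: "'b \<Rightarrow> real"
  assumes "set_pmf p \<inter> f -` A \<noteq> {}"
  shows "measure_pmf.expectation (cond_pmf p (f -` A)) (\<lambda>z. h (f z)) =
    measure_pmf.expectation (cond_pmf (map_pmf f p) A) h"
  using assms by (simp add: cond_map_pmf)

section \<open>The public indicator scheme\<close>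

definition indicator_scheme :: "'v set pmf \<Rightarrow> ('a \<Rightarrow> 'v) \<Rightarrow> ('v \<Rightarrow> real) pmf" where
  "indicator_scheme D = (\<lambda>_. map_pmf indicator D)"

lemma signaling_scheme_indicator_scheme:
  "signaling_scheme {0, 1} (indicator_scheme D :: ('a::finite \<Rightarrow> 'v::finite) \<Rightarrow> _)"
  by (auto simp: signaling_scheme_def indicator_scheme_def indicator_def)

lemma joint_indicator_scheme:
  "joint (indicator_scheme D) =
    map_pmf (\<lambda>(t, S). (t, indicator S)) (pair_pmf (pmf_of_set {t. bij t}) D)"
  by (simp add: joint_def indicator_scheme_def pair_pmf_def map_pmf_def bind_assoc_pmf bind_return_pmf)

lemma cost_indicator_scheme:
  fixes D :: "'v::finite set pmf"
  shows "cost (indicator_scheme D :: ('a::finite \<Rightarrow> 'v) \<Rightarrow> _) =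
    (\<Sum>v\<in>UNIV. measure_pmf.prob D {S. v \<in> S})"
proof -
  have "cost (indicator_scheme D :: ('a \<Rightarrow> 'v) \<Rightarrow> _) =
      measure_pmf.expectation (pair_pmf (pmf_of_set {t::'a \<Rightarrow> 'v. bij t}) D)
        (\<lambda>z. l1norm (indicator (snd z) :: 'v \<Rightarrow> real))"
    by (simp add: cost_def joint_indicator_scheme case_prod_unfold)
  also have "\<dots> = measure_pmf.expectation D (\<lambda>S. l1norm (indicator S :: 'v \<Rightarrow> real))"
    by (rule expectation_pair_pmf_snd)
  also have "\<dots> = measure_pmf.expectation D (\<lambda>S. \<Sum>v\<in>UNIV. 1 * indicator S v)"
    by (intro Bochner_Integration.integral_cong) (simp_all add: l1norm_def)
  finally show ?thesis by (simp only: expectation_weighted_indicator_sum) simp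
qed

lemma map_joint_indicator_scheme_eval:
  assumes "CARD('a::finite) = CARD('v::finite)"
  shows "map_pmf (\<lambda>(t, s). (t i, s)) (joint (indicator_scheme D :: ('a \<Rightarrow> 'v) \<Rightarrow> _)) =
    map_pmf (\<lambda>(v, S). (v, indicator S)) (pair_pmf (pmf_of_set UNIV) D)"
proof -
  have "map_pmf (\<lambda>(t, s). (t i, s)) (joint (indicator_scheme D :: ('a \<Rightarrow> 'v) \<Rightarrow> _)) =
      map_pmf (\<lambda>(v, S). (v, indicator S))
        (pair_pmf (map_pmf (\<lambda>t. t i) (pmf_of_set {t::'a \<Rightarrow> 'v. bij t})) D)"
    by (simp add: joint_indicator_scheme pair_map_pmf1 pmf.map_comp o_def case_prod_unfold)
  then show ?thesis by (simp only: map_pmf_eval_uniform_bij[OF assms])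
qed

lemma prob_joint_indicator_scheme:
  assumes "CARD('a::finite) = CARD('v::finite)"
  shows "measure_pmf.prob (joint (indicator_scheme D :: ('a \<Rightarrow> 'v) \<Rightarrow> _)) {(t, s). s (t i) = \<theta>} =
    measure_pmf.prob (pair_pmf (pmf_of_set UNIV) D) {(v, S). indicator S v = \<theta>}"
proof -
  have "measure_pmf.prob (joint (indicator_scheme D :: ('a \<Rightarrow> 'v) \<Rightarrow> _)) {(t, s). s (t i) = \<theta>} =
      measure_pmf.prob (map_pmf (\<lambda>(t, s). (t i, s)) (joint (indicator_scheme D :: ('a \<Rightarrow> 'v) \<Rightarrow> _)))
        {(v, s). s v = \<theta>}"
    by (simp add: vimage_def case_prod_unfold)
  also have "\<dots> = measure_pmf.prob (pair_pmf (pmf_of_set UNIV) D) {(v, S). indicator S v = \<theta>}"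
    unfolding map_joint_indicator_scheme_eval[OF assms] by (simp add: vimage_def case_prod_unfold)
  finally show ?thesis .
qed

lemma Q_indicator_scheme:
  fixes W :: "'v::finite \<Rightarrow> 'v \<Rightarrow> real"
  assumes card: "CARD('a::finite) = CARD('v)"
    and pos: "0 < measure_pmf.prob (joint (indicator_scheme D :: ('a \<Rightarrow> 'v) \<Rightarrow> _)) {(t, s). s (t i) = \<theta>}"
  shows "Q W (indicator_scheme D :: ('a \<Rightarrow> 'v) \<Rightarrow> _) i \<theta> x =
    measure_pmf.expectation (cond_pmf (pair_pmf (pmf_of_set UNIV) D) {(v, S). indicator S v = \<theta>})
      (\<lambda>(v, S). x + (\<Sum>u\<in>UNIV - {v}. W v u * indicator S u))"
proof -
  let ?J = "joint (indicator_scheme D :: ('a \<Rightarrow> 'v) \<Rightarrow> _)"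
  let ?\<nu> = "pair_pmf (pmf_of_set UNIV) D"
  define F where "F = (\<lambda>(t::'a \<Rightarrow> 'v, s::'v \<Rightarrow> real). (t i, s))"
  define G where "G = (\<lambda>(v::'v, S::'v set). (v, indicator S :: 'v \<Rightarrow> real))"
  define E where "E = {(v::'v, s::'v \<Rightarrow> real). s v = \<theta>}"
  define h where "h = (\<lambda>(v, s). x + (\<Sum>u\<in>UNIV - {v}. W v u * s u))"
  have law: "map_pmf F ?J = map_pmf G ?\<nu>"
    using map_joint_indicator_scheme_eval[OF card] by (simp add: F_def G_def)
  have pre_F: "F -` E = {(t, s). s (t i) = \<theta>}" and pre_G: "G -` E = {(v, S). indicator S v = \<theta>}"
    by (auto simp: F_def G_def E_def)
  have ne_J: "set_pmf ?J \<inter> F -` E \<noteq> {}"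
    using pos measure_pmf_zero_iff[of ?J "F -` E"] by (simp add: pre_F)
  have ne_\<nu>: "set_pmf ?\<nu> \<inter> G -` E \<noteq> {}"
    using pos measure_pmf_zero_iff[of ?\<nu> "G -` E"] prob_joint_indicator_scheme[OF card, of D i \<theta>]
    by (simp add: pre_G)
  have "Q W (indicator_scheme D :: ('a \<Rightarrow> 'v) \<Rightarrow> _) i \<theta> x =
      measure_pmf.expectation (cond_pmf ?J (F -` E)) (\<lambda>z. h (F z))"
    unfolding Q_def pre_F by (simp add: F_def h_def case_prod_unfold)
  also have "\<dots> = measure_pmf.expectation (cond_pmf (map_pmf F ?J) E) h"
    by (rule expectation_cond_map_pmf[OF ne_J])
  also have "\<dots> = measure_pmf.expectation (cond_pmf ?\<nu> (G -` E)) (\<lambda>z. h (G z))"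
    unfolding law by (rule expectation_cond_map_pmf[OF ne_\<nu>, symmetric])
  finally show ?thesis
    unfolding pre_G by (simp add: G_def h_def case_prod_unfold)
qed

lemma expectation_others_given_recommended:
  fixes W :: "'v::finite \<Rightarrow> 'v \<Rightarrow> real" and D :: "'v set pmf"
  assumes indep: "\<And>S. S \<in> set_pmf D \<Longrightarrow> independent_set W S"
    and pos: "0 < measure_pmf.prob (pair_pmf (pmf_of_set UNIV) D) {(v, S). v \<in> S}"
  shows "measure_pmf.expectation (cond_pmf (pair_pmf (pmf_of_set UNIV) D) {(v, S). v \<in> S})
    (\<lambda>(v, S). \<Sum>u\<in>UNIV - {v}. W v u * indicator S u) = 0"
proof (rule integral_eq_zero_AE)
  have ne: "set_pmf (pair_pmf (pmf_of_set UNIV) D) \<inter> {(v, S). v \<in> S} \<noteq> {}"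
    using pos measure_pmf_zero_iff[of "pair_pmf (pmf_of_set UNIV) D" "{(v, S). v \<in> S}"] by linarith
  show "AE z in cond_pmf (pair_pmf (pmf_of_set UNIV) D) {(v, S). v \<in> S}.
      (case z of (v, S) \<Rightarrow> \<Sum>u\<in>UNIV - {v}. W v u * indicator S u) = 0"
    unfolding AE_measure_pmf_iff
  proof
    fix z assume "z \<in> set_pmf (cond_pmf (pair_pmf (pmf_of_set UNIV) D) {(v, S). v \<in> S})"
    with ne obtain v S where z: "z = (v, S)" and "S \<in> set_pmf D" "v \<in> S" by auto
    then show "(case z of (v, S) \<Rightarrow> \<Sum>u\<in>UNIV - {v}. W v u * indicator S u) = 0"
      unfolding z prod.case by (intro independent_set_others_coverage indep)
  qed
qed

lemma expectation_others_given_not_recommended: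
  fixes W :: "'v::finite \<Rightarrow> 'v \<Rightarrow> real" and D :: "'v set pmf"
  assumes diag: "\<And>v. W v v = 1" and indep: "\<And>S. S \<in> set_pmf D \<Longrightarrow> independent_set W S"
    and balance: "real CARD('v) \<le> total_coverage W (\<lambda>u. measure_pmf.prob D {S. u \<in> S})"
    and pos: "0 < measure_pmf.prob (pair_pmf (pmf_of_set UNIV) D) {(v, S). v \<notin> S}"
  shows "1 \<le> measure_pmf.expectation (cond_pmf (pair_pmf (pmf_of_set UNIV) D) {(v, S). v \<notin> S})
    (\<lambda>(v, S). \<Sum>u\<in>UNIV - {v}. W v u * indicator S u)"
proof -
  let ?\<nu> = "pair_pmf (pmf_of_set UNIV) D" and ?E = "{(v, S). v \<notin> S}"
  define g where "g = (\<lambda>(v, S). \<Sum>u\<in>UNIV - {v}. W v u * indicator S u :: real)"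
  define cov where "cov = (\<lambda>(v, S). \<Sum>u\<in>UNIV. W v u * indicator S u :: real)"
  have "measure_pmf.expectation ?\<nu> cov = total_coverage W (\<lambda>u. measure_pmf.prob D {S. u \<in> S}) / CARD('v)"
    by (simp only: cov_def prod.case expectation_pair_uniform expectation_weighted_indicator_sum
        total_coverage_def)
  with balance have cov_ge: "1 \<le> measure_pmf.expectation ?\<nu> cov"
    by (simp add: le_divide_eq)
  \<comment> \<open>a type in an independent set is covered exactly once, by itself\<close>
  have "indicator ?E z * g z = cov z - 1 + indicator ?E z" if "z \<in> set_pmf ?\<nu>" for z
  proof (cases z)
    case (Pair v S)
    have "cov z = W v v * indicator S v + g z"
      unfolding cov_def g_def Pair prod.case by (rule sum.remove) auto
    then show ?thesis
      using that indep[of S] diag[of v] independent_set_others_coverage[of W S v]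
      by (cases "v \<in> S") (auto simp: Pair g_def)
  qed
  then have "measure_pmf.expectation ?\<nu> (\<lambda>z. indicator ?E z * g z) =
      measure_pmf.expectation ?\<nu> (\<lambda>z. cov z - 1 + indicator ?E z)"
    by (intro integral_cong_AE) (auto simp: AE_measure_pmf_iff)
  also have "\<dots> = measure_pmf.expectation ?\<nu> cov - 1 + measure_pmf.prob ?\<nu> ?E"
    by (simp add: measure_pmf.emeasure_eq_measure)
  finally have "measure_pmf.prob ?\<nu> ?E \<le> measure_pmf.expectation ?\<nu> (\<lambda>z. indicator ?E z * g z)"
    using cov_ge by simp
  with pos show ?thesis
    by (simp add: expectation_cond_pmf g_def field_simps)
qed

lemma persuasive_indicator_scheme:
  fixes W :: "'v::finite \<Rightarrow> 'v \<Rightarrow> real" and D :: "'v set pmf"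
  assumes card: "CARD('a::finite) = CARD('v)" and diag: "\<And>v. W v v = 1"
    and indep: "\<And>S. S \<in> set_pmf D \<Longrightarrow> independent_set W S"
    and balance: "real CARD('v) \<le> total_coverage W (\<lambda>u. measure_pmf.prob D {S. u \<in> S})"
  shows "persuasive W (indicator_scheme D :: ('a \<Rightarrow> 'v) \<Rightarrow> _)"
  unfolding persuasive_def
proof (intro allI impI)
  fix i \<theta>
  assume pos: "0 < measure_pmf.prob (joint (indicator_scheme D :: ('a \<Rightarrow> 'v) \<Rightarrow> _)) {(t, s). s (t i) = \<theta>}"
  let ?\<nu> = "pair_pmf (pmf_of_set UNIV) D" and ?E = "{(v, S). indicator S v = \<theta>}"
  define c where "c = measure_pmf.expectation (cond_pmf ?\<nu> ?E)
    (\<lambda>(v, S). \<Sum>u\<in>UNIV - {v}. W v u * indicator S u)"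
  have pos_\<nu>: "0 < measure_pmf.prob ?\<nu> ?E"
    using pos prob_joint_indicator_scheme[OF card] by simp
  have Q_eq: "Q W (indicator_scheme D :: ('a \<Rightarrow> 'v) \<Rightarrow> _) i \<theta> x = x + c" for x
    unfolding Q_indicator_scheme[OF card pos] c_def by (simp add: case_prod_unfold)
  have "set_pmf ?\<nu> \<inter> ?E \<noteq> {}"
    using pos_\<nu> measure_pmf_zero_iff[of ?\<nu> ?E] by linarith
  then have "\<theta> = 0 \<or> \<theta> = 1" by (auto simp: indicator_def)
  then have "\<theta> = 1 \<and> c = 0 \<or> \<theta> = 0 \<and> 1 \<le> c"
  proof
    assume "\<theta> = 1"
    then have E: "?E = {(v, S). v \<in> S}" by (auto simp: indicator_def)
    have "c = 0"
      unfolding c_def E using pos_\<nu> unfolding E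
      by (intro expectation_others_given_recommended indep)
    with \<open>\<theta> = 1\<close> show ?thesis by simp
  next
    assume "\<theta> = 0"
    then have E: "?E = {(v, S). v \<notin> S}" by (auto simp: indicator_def)
    have "1 \<le> c"
      unfolding c_def E using pos_\<nu> unfolding E
      by (intro expectation_others_given_not_recommended diag indep balance)
    with \<open>\<theta> = 0\<close> show ?thesis by simp
  qed
  then show "1 \<le> Q W (indicator_scheme D :: ('a \<Rightarrow> 'v) \<Rightarrow> _) i \<theta> \<theta> \<and>
      \<theta> = (LEAST x. 0 \<le> x \<and> 1 \<le> Q W (indicator_scheme D :: ('a \<Rightarrow> 'v) \<Rightarrow> _) i \<theta> x)"
    by (auto simp: Q_eq least_nonneg_shift)
qed

lemma scaled_stable_indicator_scheme:
  fixes W :: "'v::finite \<Rightarrow> 'v \<Rightarrow> real"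
  assumes card: "CARD('a::finite) = CARD('v)" and uw: "unit_weight W" and stable: "stable W \<theta>"
    and R_ge: "CARD('v) \<le> total_coverage W \<theta>"
  obtains D where "persuasive W (indicator_scheme D :: ('a \<Rightarrow> 'v) \<Rightarrow> _)"
    and "cost (indicator_scheme D :: ('a \<Rightarrow> 'v) \<Rightarrow> _) = CARD('v) / total_coverage W \<theta> * l1norm \<theta>"
proof -
  have "0 < real CARD('v)" by simp
  with R_ge have R_pos: "0 < total_coverage W \<theta>" by linarith
  define r where "r = CARD('v) / total_coverage W \<theta>"
  have "0 < r" "r \<le> 1" using R_ge R_pos by (simp_all add: r_def field_simps)
  have \<theta>_nonneg: "0 \<le> \<theta> v" for v
    using stable unfolding stable_def feasible_def by blast
  define x where "x v = r * \<theta> v" for v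
  obtain D where D_indep: "\<forall>S\<in>set_pmf D. independent_set W S"
    and D_marg: "\<forall>v. measure_pmf.prob D {S. v \<in> S} = x v"
    using independent_set_pmf_with_marginals[of W x UNIV] uw \<theta>_nonneg \<open>0 < r\<close>
      stable_scaled_local_bound[OF stable \<open>r \<le> 1\<close>]
    by (auto simp: unit_weight_def x_def)
  have "total_coverage W (\<lambda>u. measure_pmf.prob D {S. u \<in> S}) = r * total_coverage W \<theta>"
    using D_marg by (simp add: total_coverage_def x_def sum_distrib_left mult.left_commute)
  then have "real CARD('v) \<le> total_coverage W (\<lambda>u. measure_pmf.prob D {S. u \<in> S})"
    using R_pos by (simp add: r_def)
  then have "persuasive W (indicator_scheme D :: ('a \<Rightarrow> 'v) \<Rightarrow> _)"
    using persuasive_indicator_scheme[OF card] uw D_indep by (auto simp: unit_weight_def)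
  moreover have "cost (indicator_scheme D :: ('a \<Rightarrow> 'v) \<Rightarrow> _) = r * l1norm \<theta>"
    using D_marg \<theta>_nonneg by (simp add: cost_indicator_scheme x_def l1norm_eq_sum sum_distrib_left)
  ultimately show ?thesis using that by (simp add: r_def)
qed

theorem theorem1p3:
  fixes W :: "'v::finite \<Rightarrow> 'v \<Rightarrow> real"
  assumes "CARD('a::finite) = CARD('v)"
    and "unit_weight W"
    and "OPT W < OPT_stable W"
  shows "\<exists>(Sig::real set) (\<phi>::('a \<Rightarrow> 'v) \<Rightarrow> ('v \<Rightarrow> real) pmf).
           signaling_scheme Sig \<phi> \<and> card Sig = 2 \<and> persuasive W \<phi> \<and> cost \<phi> < OPT_stable W"
proof -
  obtain \<theta> where stable: "stable W \<theta>" and R_ge: "CARD('v) \<le> total_coverage W \<theta>"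
    and cheap: "CARD('v) * l1norm \<theta> < OPT_stable W * total_coverage W \<theta>"
    using stable_with_cheap_rescaling[OF assms(2,3)] by blast
  obtain D where persuasive_D: "persuasive W (indicator_scheme D :: ('a \<Rightarrow> 'v) \<Rightarrow> _)"
    and cost_D: "cost (indicator_scheme D :: ('a \<Rightarrow> 'v) \<Rightarrow> _) = CARD('v) / total_coverage W \<theta> * l1norm \<theta>"
    using scaled_stable_indicator_scheme[OF assms(1,2) stable R_ge] by blast
  have "0 < real CARD('v)" by simp
  with R_ge have "0 < total_coverage W \<theta>" by linarith
  with cheap have "cost (indicator_scheme D :: ('a \<Rightarrow> 'v) \<Rightarrow> _) < OPT_stable W"
    by (simp add: cost_D field_simps)
  with persuasive_D signaling_scheme_indicator_scheme show ?thesis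
    by (intro exI[of _ "{0, 1}"] exI[of _ "indicator_scheme D"]) simp
qed

end
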